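(* Let $A\overset{i}{\to}U\overset{j}{\to}G$ and $A\overset{i'}{\to}U'\overset{j'}{\to}G$ be extensions of a semilattice of groups $A$ by a group $G$, and let $\pi:U\to S$, $\kappa:S\to G$ and $\pi':U'\to S'$, $\kappa':S'\to G$ be epimorphisms onto inverse semigroups such that $A\overset{i}{\to}U\overset{\pi}{\to}S$ and $A\overset{i'}{\to}U'\overset{\pi'}{\to}S'$ are extensions of $A$ by $S$ and by $S'$ respectively, $j=\kappa\circ\pi$ and $j'=\kappa'\circ\pi'$. Given a homomorphism $\mu:U\to U'$ with $\mu\circ i=i'$ and $j'\circ\mu=j$, there exists a homomorphism $\nu:S\to S'$ such that $\nu\circ\pi=\pi'\circ\mu$ and $\kappa'\circ\nu=\kappa$. Moreover, if $\mu$ is injective then $\nu$ is injective, and if $\mu$ is surjective then $\nu$ is surjective.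
   Context: A semilattice of groups is an inverse semigroup whose idempotents are central. An extension of $A$ by a group $G$ is an inverse semigroup $U$ with a monomorphism $i:A\to U$ and an epimorphism $j:U\to G$ with $i(A)=j^{-1}(1)$. An extension of $A$ by an inverse semigroup $S$ is an inverse semigroup $U$ with a monomorphism $i:A\to U$ and an idempotent-separating epimorphism $\pi:U\to S$ with $i(A)=\pi^{-1}(E(S))$. *)

theory Defs
  imports "HOL-Algebra.Group"
begin

text \<open>Semigroups are modelled by HOL-Algebra monoid records (the unit field is ignored);
  homomorphisms are the HOL-Algebra multiplicative homomorphisms hom, which do not
  mention the unit.\<close>

definition inverse_semigroup :: "('a, 'm) monoid_scheme \<Rightarrow> bool" where
  "inverse_semigroup S \<longleftrightarrow> 
     (\<forall>x\<in>carrier S. \<forall>y\<in>carrier S. x \<otimes>\<^bsub>S\<^esub> y \<in> carrier S) \<and>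
     (\<forall>x\<in>carrier S. \<forall>y\<in>carrier S. \<forall>z\<in>carrier S.
        x \<otimes>\<^bsub>S\<^esub> y \<otimes>\<^bsub>S\<^esub> z = x \<otimes>\<^bsub>S\<^esub> (y \<otimes>\<^bsub>S\<^esub> z)) \<and>
     (\<forall>a\<in>carrier S. \<exists>!b. b \<in> carrier S \<and>
        a \<otimes>\<^bsub>S\<^esub> b \<otimes>\<^bsub>S\<^esub> a = a \<and> b \<otimes>\<^bsub>S\<^esub> a \<otimes>\<^bsub>S\<^esub> b = b)"

definition idempotents :: "('a, 'm) monoid_scheme \<Rightarrow> 'a set" where
  "idempotents S = {e \<in> carrier S. e \<otimes>\<^bsub>S\<^esub> e = e}"

definition semilattice_of_groups :: "('a, 'm) monoid_scheme \<Rightarrow> bool" where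
  "semilattice_of_groups A \<longleftrightarrow> inverse_semigroup A \<and>
     (\<forall>e\<in>idempotents A. \<forall>a\<in>carrier A. e \<otimes>\<^bsub>A\<^esub> a = a \<otimes>\<^bsub>A\<^esub> e)"

definition monomorphism :: "('a, 'm) monoid_scheme \<Rightarrow> ('b, 'n) monoid_scheme \<Rightarrow> ('a \<Rightarrow> 'b) \<Rightarrow> bool" where
  "monomorphism A B f \<longleftrightarrow> f \<in> hom A B \<and> inj_on f (carrier A)"

definition epimorphism :: "('a, 'm) monoid_scheme \<Rightarrow> ('b, 'n) monoid_scheme \<Rightarrow> ('a \<Rightarrow> 'b) \<Rightarrow> bool" where
  "epimorphism A B f \<longleftrightarrow> f \<in> hom A B \<and> f ` carrier A = carrier B"

definition group_extension ::
  "('a, 'm) monoid_scheme \<Rightarrow> ('u, 'n) monoid_scheme \<Rightarrow> ('g, 'k) monoid_scheme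
   \<Rightarrow> ('a \<Rightarrow> 'u) \<Rightarrow> ('u \<Rightarrow> 'g) \<Rightarrow> bool" where
  "group_extension A U G i j \<longleftrightarrow> inverse_semigroup A \<and> inverse_semigroup U \<and> group G \<and>
     monomorphism A U i \<and> epimorphism U G j \<and>
     i ` carrier A = {u \<in> carrier U. j u = \<one>\<^bsub>G\<^esub>}"

definition inv_sg_extension ::
  "('a, 'm) monoid_scheme \<Rightarrow> ('u, 'n) monoid_scheme \<Rightarrow> ('s, 'k) monoid_scheme
   \<Rightarrow> ('a \<Rightarrow> 'u) \<Rightarrow> ('u \<Rightarrow> 's) \<Rightarrow> bool" where
  "inv_sg_extension A U S i p \<longleftrightarrow> inverse_semigroup A \<and> inverse_semigroup U \<and> inverse_semigroup S \<and>
     monomorphism A U i \<and> epimorphism U S p \<and> inj_on p (idempotents U) \<and>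
     i ` carrier A = {u \<in> carrier U. p u \<in> idempotents S}"

end

theory Submission
  imports Defs
begin

text \<open>An idempotent-separating homomorphism f of inverse semigroups identifies u and v
  exactly when uu\<inverse> = vv\<inverse>, u\<inverse>u = v\<inverse>v and f(u\<inverse>v) is idempotent. For \<pi> and \<pi>' the
  last condition says that u\<inverse>v lies in the copy of A, and \<mu> carries the copy of A in U onto
  the one in U' (and reflects it when \<mu> is injective). Hence \<pi>' \<circ> \<mu> is constant on the fibres
  of \<pi> and factors as \<nu> \<circ> \<pi>; injectivity and surjectivity pass from \<mu> to \<nu>, and
  \<kappa>' \<circ> \<nu> = \<kappa> follows from j = \<kappa> \<circ> \<pi>, j' = \<kappa>' \<circ> \<pi>' and j' \<circ> \<mu> = j.\<close>

definition sinv :: "('a, 'm) monoid_scheme \<Rightarrow> 'a \<Rightarrow> 'a" where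
  "sinv S a = (THE b. b \<in> carrier S \<and> a \<otimes>\<^bsub>S\<^esub> b \<otimes>\<^bsub>S\<^esub> a = a \<and> b \<otimes>\<^bsub>S\<^esub> a \<otimes>\<^bsub>S\<^esub> b = b)"

context
  fixes S (structure)
  assumes S: "inverse_semigroup S"
begin

lemma inverse_semigroup_m_closed [simp]:
  "x \<in> carrier S \<Longrightarrow> y \<in> carrier S \<Longrightarrow> x \<otimes> y \<in> carrier S"
  using S unfolding inverse_semigroup_def by blast

lemma inverse_semigroup_m_assoc:
  "x \<in> carrier S \<Longrightarrow> y \<in> carrier S \<Longrightarrow> z \<in> carrier S \<Longrightarrow> x \<otimes> y \<otimes> z = x \<otimes> (y \<otimes> z)"
  using S unfolding inverse_semigroup_def by blast

lemma sinv_unique_inverse: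
  "a \<in> carrier S \<Longrightarrow> \<exists>!b. b \<in> carrier S \<and> a \<otimes> b \<otimes> a = a \<and> b \<otimes> a \<otimes> b = b"
  using S unfolding inverse_semigroup_def by blast

lemma sinv_is_inverse:
  "a \<in> carrier S \<Longrightarrow>
    sinv S a \<in> carrier S \<and> a \<otimes> sinv S a \<otimes> a = a \<and> sinv S a \<otimes> a \<otimes> sinv S a = sinv S a"
  unfolding sinv_def by (rule theI'[OF sinv_unique_inverse])

lemma sinv_closed [simp]: "a \<in> carrier S \<Longrightarrow> sinv S a \<in> carrier S"
  and sinv_left_right: "a \<in> carrier S \<Longrightarrow> a \<otimes> (sinv S a \<otimes> a) = a"
  and sinv_right_left: "a \<in> carrier S \<Longrightarrow> sinv S a \<otimes> (a \<otimes> sinv S a) = sinv S a"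
  using sinv_is_inverse[of a] by (auto simp flip: inverse_semigroup_m_assoc)

lemma sinv_eqI:
  assumes "a \<in> carrier S" "b \<in> carrier S" "a \<otimes> b \<otimes> a = a" "b \<otimes> a \<otimes> b = b"
  shows "sinv S a = b"
  unfolding sinv_def using assms by (intro the1_equality sinv_unique_inverse) auto

lemma idempotents_mult_sinv:
  assumes "a \<in> carrier S"
  shows "a \<otimes> sinv S a \<in> idempotents S" and "sinv S a \<otimes> a \<in> idempotents S"
  using assms sinv_left_right sinv_right_left
  by (auto simp: idempotents_def inverse_semigroup_m_assoc)

text \<open>The idempotent e = x\<inverse>y satisfies e(y\<inverse>x) = x\<inverse>x and e(x\<inverse>x) = e;
  hence x\<inverse>x = ee(y\<inverse>x) = e, and y = xx\<inverse>y = xe = xx\<inverse>x = x.\<close>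
lemma inverse_semigroup_eqI:
  assumes x: "x \<in> carrier S" and y: "y \<in> carrier S"
    and range_eq: "x \<otimes> sinv S x = y \<otimes> sinv S y"
    and domain_eq: "sinv S x \<otimes> x = sinv S y \<otimes> y"
    and idem: "sinv S x \<otimes> y \<in> idempotents S"
  shows "x = y"
proof -
  note assoc = inverse_semigroup_m_assoc
  define e where "e = sinv S x \<otimes> y"
  have e: "e \<in> carrier S" "e \<otimes> e = e" using idem unfolding e_def idempotents_def by auto
  have "e \<otimes> (sinv S y \<otimes> x) = sinv S x \<otimes> (y \<otimes> sinv S y) \<otimes> x"
    unfolding e_def using x y by (simp add: assoc)
  also have "\<dots> = sinv S x \<otimes> x"
    using x by (simp add: range_eq[symmetric] assoc sinv_right_left)
  finally have e_left: "e \<otimes> (sinv S y \<otimes> x) = sinv S x \<otimes> x" .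
  have "e \<otimes> (sinv S x \<otimes> x) = sinv S x \<otimes> (y \<otimes> (sinv S y \<otimes> y))"
    unfolding e_def using x y by (simp add: domain_eq assoc)
  also have "\<dots> = e" unfolding e_def using y by (simp add: sinv_left_right)
  finally have e_right: "e \<otimes> (sinv S x \<otimes> x) = e" .
  have x_e: "sinv S x \<otimes> x = e"
    using e_left e_right e x y by (metis assoc sinv_closed inverse_semigroup_m_closed)
  have "y = x \<otimes> sinv S x \<otimes> y"
    using y by (simp add: range_eq assoc sinv_left_right)
  also have "\<dots> = x \<otimes> e" unfolding e_def using x y by (simp add: assoc)
  also have "\<dots> = x" unfolding x_e[symmetric] using x by (rule sinv_left_right)
  finally show ?thesis by simp
qed

end

lemma hom_idempotents:
  "f \<in> hom S T \<Longrightarrow> e \<in> idempotents S \<Longrightarrow> f e \<in> idempotents T"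
  unfolding idempotents_def by (auto simp: hom_in_carrier simp flip: hom_mult)

lemma hom_sinv:
  assumes S: "inverse_semigroup S" and T: "inverse_semigroup T"
    and f: "f \<in> hom S T" and a: "a \<in> carrier S"
  shows "f (sinv S a) = sinv T (f a)"
proof -
  have "f a \<otimes>\<^bsub>T\<^esub> f (sinv S a) \<otimes>\<^bsub>T\<^esub> f a = f (a \<otimes>\<^bsub>S\<^esub> sinv S a \<otimes>\<^bsub>S\<^esub> a)"
   and "f (sinv S a) \<otimes>\<^bsub>T\<^esub> f a \<otimes>\<^bsub>T\<^esub> f (sinv S a) = f (sinv S a \<otimes>\<^bsub>S\<^esub> a \<otimes>\<^bsub>S\<^esub> sinv S a)"
    using S a by (simp_all add: hom_mult[OF f])
  then show ?thesis
    using sinv_is_inverse[OF S a] a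
    by (auto intro!: sinv_eqI[OF T, symmetric] hom_in_carrier[OF f])
qed

lemma hom_eqI_inverse_semigroup:
  assumes U: "inverse_semigroup U" and T: "inverse_semigroup T" and f: "f \<in> hom U T"
    and u: "u \<in> carrier U" and v: "v \<in> carrier U"
    and range_eq: "u \<otimes>\<^bsub>U\<^esub> sinv U u = v \<otimes>\<^bsub>U\<^esub> sinv U v"
    and domain_eq: "sinv U u \<otimes>\<^bsub>U\<^esub> u = sinv U v \<otimes>\<^bsub>U\<^esub> v"
    and idem: "f (sinv U u \<otimes>\<^bsub>U\<^esub> v) \<in> idempotents T"
  shows "f u = f v"
proof (rule inverse_semigroup_eqI[OF T hom_in_carrier[OF f u] hom_in_carrier[OF f v]])
  have f_mult: "f (x \<otimes>\<^bsub>U\<^esub> y) = f x \<otimes>\<^bsub>T\<^esub> f y" if "x \<in> carrier U" "y \<in> carrier U" for x y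
    using that by (rule hom_mult[OF f])
  note f_sinv = hom_sinv[OF U T f, symmetric]
  show "f u \<otimes>\<^bsub>T\<^esub> sinv T (f u) = f v \<otimes>\<^bsub>T\<^esub> sinv T (f v)"
    using range_eq U u v by (simp add: f_sinv flip: f_mult)
  show "sinv T (f u) \<otimes>\<^bsub>T\<^esub> f u = sinv T (f v) \<otimes>\<^bsub>T\<^esub> f v"
    using domain_eq U u v by (simp add: f_sinv flip: f_mult)
  show "sinv T (f u) \<otimes>\<^bsub>T\<^esub> f v \<in> idempotents T"
    using idem U u v by (simp add: f_sinv f_mult)
qed

lemma idempotent_separating_hom_eq_iff:
  assumes U: "inverse_semigroup U" and T: "inverse_semigroup T" and f: "f \<in> hom U T"
    and sep: "inj_on f (idempotents U)"
    and u: "u \<in> carrier U" and v: "v \<in> carrier U"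
  shows "f u = f v \<longleftrightarrow>
    u \<otimes>\<^bsub>U\<^esub> sinv U u = v \<otimes>\<^bsub>U\<^esub> sinv U v \<and> sinv U u \<otimes>\<^bsub>U\<^esub> u = sinv U v \<otimes>\<^bsub>U\<^esub> v \<and>
    f (sinv U u \<otimes>\<^bsub>U\<^esub> v) \<in> idempotents T" (is "_ \<longleftrightarrow> ?trace_and_kernel")
proof
  assume eq: "f u = f v"
  note f_sinv = hom_sinv[OF U T f] and f_mult = hom_mult[OF f]
  have "f (u \<otimes>\<^bsub>U\<^esub> sinv U u) = f (v \<otimes>\<^bsub>U\<^esub> sinv U v)"
   and "f (sinv U u \<otimes>\<^bsub>U\<^esub> u) = f (sinv U v \<otimes>\<^bsub>U\<^esub> v)"
    using eq U u v by (simp_all add: f_sinv f_mult)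
  moreover have "f (sinv U u \<otimes>\<^bsub>U\<^esub> v) \<in> idempotents T"
    using eq U u v idempotents_mult_sinv(2)[OF T hom_in_carrier[OF f v]]
    by (simp add: f_sinv f_mult)
  ultimately show ?trace_and_kernel
    using sep idempotents_mult_sinv[OF U u] idempotents_mult_sinv[OF U v] by (auto dest: inj_onD)
next
  show "?trace_and_kernel \<Longrightarrow> f u = f v"
    using hom_eqI_inverse_semigroup[OF U T f u v] by blast
qed

lemma hom_factor_through_epimorphism:
  assumes closed: "\<And>x y. x \<in> carrier U \<Longrightarrow> y \<in> carrier U \<Longrightarrow> x \<otimes>\<^bsub>U\<^esub> y \<in> carrier U"
    and p: "epimorphism U S p" and f: "f \<in> hom U T"
    and respects: "\<And>u v. u \<in> carrier U \<Longrightarrow> v \<in> carrier U \<Longrightarrow> p u = p v \<Longrightarrow> f u = f v"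
  shows "\<exists>g \<in> hom S T. \<forall>u\<in>carrier U. g (p u) = f u"
proof -
  have p_hom: "p \<in> hom U S" and p_onto: "p ` carrier U = carrier S"
    using p unfolding epimorphism_def by auto
  define g where "g s = f (inv_into (carrier U) p s)" for s
  have g_p: "g (p u) = f u" if "u \<in> carrier U" for u
    unfolding g_def using that by (intro respects inv_into_into f_inv_into_f) auto
  have "g \<in> hom S T"
  proof (rule homI)
    fix s t assume "s \<in> carrier S" "t \<in> carrier S"
    then obtain u v where u: "u \<in> carrier U" "s = p u" and v: "v \<in> carrier U" "t = p v"
      using p_onto by blast
    show "g (s \<otimes>\<^bsub>S\<^esub> t) = g s \<otimes>\<^bsub>T\<^esub> g t"
      using u v closed by (simp add: g_p hom_mult[OF f] flip: hom_mult[OF p_hom])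
    show "g s \<in> carrier T"
      using u g_p hom_in_carrier[OF f] by simp
  qed
  with g_p show ?thesis by blast
qed

lemma inv_sg_extension_kernel:
  assumes "inv_sg_extension A U S i p" "u \<in> carrier U"
  shows "p u \<in> idempotents S \<longleftrightarrow> u \<in> i ` carrier A"
  using assms unfolding inv_sg_extension_def by blast

lemma inv_sg_extensionD:
  assumes "inv_sg_extension A U S i p"
  shows "inverse_semigroup U" "inverse_semigroup S" "p \<in> hom U S" "inj_on p (idempotents U)"
  using assms unfolding inv_sg_extension_def epimorphism_def by auto

lemma inv_sg_extension_hom_respects:
  assumes ext: "inv_sg_extension A U S i p" and ext': "inv_sg_extension A U' S' i' p'"
    and h: "h \<in> hom U U'" and h_i: "\<forall>a\<in>carrier A. h (i a) = i' a"
    and u: "u \<in> carrier U" and v: "v \<in> carrier U" and eq: "p u = p v"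
  shows "p' (h u) = p' (h v)"
proof -
  note ext_U = inv_sg_extensionD[OF ext]
  note ext_U' = inv_sg_extensionD[OF ext']
  have f: "p' \<circ> h \<in> hom U S'" using hom_compose[OF h ext_U'(3)] .
  have w: "sinv U u \<otimes>\<^bsub>U\<^esub> v \<in> carrier U" using ext_U(1) u v by simp
  have trace: "u \<otimes>\<^bsub>U\<^esub> sinv U u = v \<otimes>\<^bsub>U\<^esub> sinv U v" "sinv U u \<otimes>\<^bsub>U\<^esub> u = sinv U v \<otimes>\<^bsub>U\<^esub> v"
   and "p (sinv U u \<otimes>\<^bsub>U\<^esub> v) \<in> idempotents S"
    using eq idempotent_separating_hom_eq_iff[OF ext_U u v] by auto
  then obtain a where "a \<in> carrier A" "sinv U u \<otimes>\<^bsub>U\<^esub> v = i a"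
    using inv_sg_extension_kernel[OF ext w] by auto
  then have "(p' \<circ> h) (sinv U u \<otimes>\<^bsub>U\<^esub> v) \<in> idempotents S'"
    using inv_sg_extension_kernel[OF ext' hom_in_carrier[OF h w]] h_i by auto
  then show ?thesis
    using hom_eqI_inverse_semigroup[OF ext_U(1) ext_U'(2) f u v trace] by simp
qed

lemma inv_sg_extension_injective_hom_reflects:
  assumes ext: "inv_sg_extension A U S i p" and ext': "inv_sg_extension A U' S' i' p'"
    and h: "h \<in> hom U U'" and h_i: "\<forall>a\<in>carrier A. h (i a) = i' a"
    and h_inj: "inj_on h (carrier U)"
    and u: "u \<in> carrier U" and v: "v \<in> carrier U" and eq: "p' (h u) = p' (h v)"
  shows "p u = p v"
proof -
  note ext_U = inv_sg_extensionD[OF ext]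
  note ext_U' = inv_sg_extensionD[OF ext']
  have i: "i \<in> hom A U"
    using ext unfolding inv_sg_extension_def monomorphism_def by blast
  have f: "p' \<circ> h \<in> hom U S'" using hom_compose[OF h ext_U'(3)] .
  have "inj_on (p' \<circ> h) (idempotents U)"
  proof (rule comp_inj_on)
    show "inj_on h (idempotents U)"
      using h_inj by (rule inj_on_subset) (auto simp: idempotents_def)
    show "inj_on p' (h ` idempotents U)"
      using ext_U'(4) by (rule inj_on_subset) (auto intro: hom_idempotents[OF h])
  qed
  with eq have trace: "u \<otimes>\<^bsub>U\<^esub> sinv U u = v \<otimes>\<^bsub>U\<^esub> sinv U v" "sinv U u \<otimes>\<^bsub>U\<^esub> u = sinv U v \<otimes>\<^bsub>U\<^esub> v"
   and "p' (h (sinv U u \<otimes>\<^bsub>U\<^esub> v)) \<in> idempotents S'"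
    using idempotent_separating_hom_eq_iff[OF ext_U(1) ext_U'(2) f _ u v] by auto
  have w: "sinv U u \<otimes>\<^bsub>U\<^esub> v \<in> carrier U" using ext_U(1) u v by simp
  then obtain a where a: "a \<in> carrier A" "h (sinv U u \<otimes>\<^bsub>U\<^esub> v) = h (i a)"
    using inv_sg_extension_kernel[OF ext' hom_in_carrier[OF h w]] h_i \<open>p' (h _) \<in> _\<close> by auto
  then have "sinv U u \<otimes>\<^bsub>U\<^esub> v = i a"
    using h_inj w hom_in_carrier[OF i] by (auto dest: inj_onD)
  then have "p (sinv U u \<otimes>\<^bsub>U\<^esub> v) \<in> idempotents S"
    using inv_sg_extension_kernel[OF ext w] a(1) by auto
  then show ?thesis
    using idempotent_separating_hom_eq_iff[OF ext_U u v] trace by auto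
qed

lemma image_through_surjection:
  assumes "p ` X = Y" and "\<forall>x\<in>X. g (p x) = f x"
  shows "g ` Y = f ` X"
  using assms by (force simp: image_iff)

lemma inj_on_through_surjection:
  assumes "p ` X = Y" and "\<forall>x\<in>X. g (p x) = f x"
    and "\<And>x y. x \<in> X \<Longrightarrow> y \<in> X \<Longrightarrow> f x = f y \<Longrightarrow> p x = p y"
  shows "inj_on g Y"
proof (rule inj_onI)
  fix y y' assume "y \<in> Y" "y' \<in> Y" and eq: "g y = g y'"
  then obtain x x' where x: "x \<in> X" "y = p x" and x': "x' \<in> X" "y' = p x'"
    using assms(1) by blast
  with eq assms(2) have "f x = f x'" by simp
  then show "y = y'" using assms(3)[OF x(1) x'(1)] x x' by simp
qed

theorem proposition4p6:
  fixes A :: "('a, 'm) monoid_scheme" and U :: "('u, 'n) monoid_scheme"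
    and U' :: "('v, 'o) monoid_scheme" and G :: "('g, 'k) monoid_scheme"
    and S :: "('s, 'p) monoid_scheme" and S' :: "('t, 'q) monoid_scheme"
    and i :: "'a \<Rightarrow> 'u" and j :: "'u \<Rightarrow> 'g" and i' :: "'a \<Rightarrow> 'v" and j' :: "'v \<Rightarrow> 'g"
    and \<pi> :: "'u \<Rightarrow> 's" and \<kappa> :: "'s \<Rightarrow> 'g" and \<pi>' :: "'v \<Rightarrow> 't" and \<kappa>' :: "'t \<Rightarrow> 'g"
    and \<mu> :: "'u \<Rightarrow> 'v"
  assumes "semilattice_of_groups A"
    and "group_extension A U G i j"
    and "group_extension A U' G i' j'"
    and "inverse_semigroup S" and "inverse_semigroup S'"
    and "epimorphism U S \<pi>" and "epimorphism S G \<kappa>"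
    and "epimorphism U' S' \<pi>'" and "epimorphism S' G \<kappa>'"
    and "inv_sg_extension A U S i \<pi>"
    and "inv_sg_extension A U' S' i' \<pi>'"
    and "\<forall>u\<in>carrier U. j u = \<kappa> (\<pi> u)"
    and "\<forall>u\<in>carrier U'. j' u = \<kappa>' (\<pi>' u)"
    and "\<mu> \<in> hom U U'"
    and "\<forall>a\<in>carrier A. \<mu> (i a) = i' a"
    and "\<forall>u\<in>carrier U. j' (\<mu> u) = j u"
  shows "\<exists>\<nu> \<in> hom S S'.
           (\<forall>u\<in>carrier U. \<nu> (\<pi> u) = \<pi>' (\<mu> u)) \<and>
           (\<forall>s\<in>carrier S. \<kappa>' (\<nu> s) = \<kappa> s) \<and>
           (inj_on \<mu> (carrier U) \<longrightarrow> inj_on \<nu> (carrier S)) \<and>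
           (\<mu> ` carrier U = carrier U' \<longrightarrow> \<nu> ` carrier S = carrier S')"
proof -
  note ext = assms(10) and ext' = assms(11) and \<mu> = assms(14) and \<mu>_i = assms(15)
  note ext_U = inv_sg_extensionD[OF ext]
  note ext_U' = inv_sg_extensionD[OF ext']
  have "\<exists>\<nu> \<in> hom S S'. \<forall>u\<in>carrier U. \<nu> (\<pi> u) = \<pi>' (\<mu> u)"
    by (rule hom_factor_through_epimorphism[OF inverse_semigroup_m_closed[OF ext_U(1)] assms(6)
          hom_compose[OF \<mu> ext_U'(3), unfolded comp_def] inv_sg_extension_hom_respects[OF ext ext' \<mu> \<mu>_i]])
  then obtain \<nu> where \<nu>: "\<nu> \<in> hom S S'" and \<nu>_\<pi>: "\<forall>u\<in>carrier U. \<nu> (\<pi> u) = \<pi>' (\<mu> u)"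
    by blast
  have \<pi>_onto: "\<pi> ` carrier U = carrier S" and \<pi>'_onto: "\<pi>' ` carrier U' = carrier S'"
    using assms(6,8) unfolding epimorphism_def by auto
  have "\<kappa>' (\<nu> (\<pi> u)) = \<kappa> (\<pi> u)" if "u \<in> carrier U" for u
    using that \<nu>_\<pi> assms(12,16) assms(13)[rule_format, OF hom_in_carrier[OF \<mu> that]] by metis
  then have "\<forall>s\<in>carrier S. \<kappa>' (\<nu> s) = \<kappa> s"
    unfolding \<pi>_onto[symmetric] by blast
  moreover have "inj_on \<nu> (carrier S)" if "inj_on \<mu> (carrier U)"
    using \<pi>_onto \<nu>_\<pi> inv_sg_extension_injective_hom_reflects[OF ext ext' \<mu> \<mu>_i that]
    by (rule inj_on_through_surjection)
  moreover have "\<nu> ` carrier S = carrier S'" if "\<mu> ` carrier U = carrier U'"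
    using image_through_surjection[OF \<pi>_onto \<nu>_\<pi>] by (simp add: image_image flip: that \<pi>'_onto)
  ultimately show ?thesis using \<nu> \<nu>_\<pi> by blast
qed

end
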